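(* Fix $\theta\in(0,1)$ such that the set $\{x\ge 0: \frac{x^s+(b-1)^\theta}{b^\theta}\le x\}$ is nonempty, and set $$x_\theta:=\max\left\{x\ge 0:\ \frac{x^s+(b-1)^\theta}{b^\theta}\le x\right\}.$$ If $\mathbb E\left[\exp\left(\theta(\beta\omega_1-\log M(\beta)+h)\right)\right]\le 1$ and there exists $n$ such that $\mathbb E[R_n^\theta]\le x_\theta$, then $\textsc{f}(\beta,h)=0$.
   Context: Fix an integer $s\ge 2$ and a real $b>1$. Let $\omega_1$ be a real random variable (law $\mathbb P$, expectation $\mathbb E$) with $\mathbb E[\omega_1]=0$, $\mathbb E[\omega_1^2]=1$ and $M(\beta):=\mathbb E[e^{\beta\omega_1}]<\infty$ for every $\beta>0$. For $\beta>0$, $h\in\mathbb R$, let $A$ denote a random variable with the law of $\exp(\beta\omega_1-\log M(\beta)+h)$. Define random variables $R_n=R_n(\beta,h)$ (in law) recursively by $R_0:=1$ and $$R_{n+1}=\frac{\prod_{j=1}^{s}R_n^{(j)}\prod_{j=1}^{s-1}A_j+b-1}{b},$$ where $R_n^{(1)},\dots,R_n^{(s)},A_1,\dots,A_{s-1}$ are independent, each $R_n^{(j)}$ has the law of $R_n$ and each $A_j$ has the law of $A$. The free energy is $\textsc{f}(\beta,h):=\lim_{n\to\infty}s^{-n}\mathbb E\log R_n$ (this limit exists). *)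

theory Defs
  imports "HOL-Probability.Probability"
begin

text \<open>Law of omega_1 is a probability measure mu on the reals.
  M(beta) = E[exp(beta omega_1)].\<close>
definition mgf :: "real measure \<Rightarrow> real \<Rightarrow> real" where
  "mgf \<mu> \<beta> = (\<integral>w. exp (\<beta> * w) \<partial>\<mu>)"

definition A_law :: "real measure \<Rightarrow> real \<Rightarrow> real \<Rightarrow> real measure" where
  "A_law \<mu> \<beta> h = distr \<mu> borel (\<lambda>w. exp (\<beta> * w - ln (mgf \<mu> \<beta>) + h))"

text \<open>Law of R_n. Coordinates j < s are i.i.d. copies of R_n,
  coordinates s <= j < 2s-1 are i.i.d. copies of A, all independent.\<close>
fun R_law :: "real measure \<Rightarrow> nat \<Rightarrow> real \<Rightarrow> real \<Rightarrow> real \<Rightarrow> nat \<Rightarrow> real measure" where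
  "R_law \<mu> s b \<beta> h 0 = return borel 1"
| "R_law \<mu> s b \<beta> h (Suc n) =
     distr (PiM {..<2 * s - 1} (\<lambda>j. if j < s then R_law \<mu> s b \<beta> h n else A_law \<mu> \<beta> h)) borel
       (\<lambda>x. ((\<Prod>j<s. x j) * (\<Prod>j\<in>{s..<2 * s - 1}. x j) + b - 1) / b)"

text \<open>The sequence s^{-n} E[log R_n], whose limit is the free energy.\<close>
definition free_energy_seq :: "real measure \<Rightarrow> nat \<Rightarrow> real \<Rightarrow> real \<Rightarrow> real \<Rightarrow> nat \<Rightarrow> real" where
  "free_energy_seq \<mu> s b \<beta> h n = (\<integral>r. ln r \<partial>(R_law \<mu> s b \<beta> h n)) / real s ^ n"

definition x_theta :: "nat \<Rightarrow> real \<Rightarrow> real \<Rightarrow> real" where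
  "x_theta s b \<theta> = (GREATEST x. x \<ge> 0 \<and> (x ^ s + (b - 1) powr \<theta>) / b powr \<theta> \<le> x)"

end

theory Submission
  imports Defs
begin

text \<open>For \<open>0 < \<theta> < 1\<close> the map \<open>x \<mapsto> x\<^sup>\<theta>\<close> is concave and subadditive, so the recursion
  for \<open>R\<^sub>n\<close> and independence give
  \<open>E[R\<^sub>n\<^sub>+\<^sub>1\<^sup>\<theta>] \<le> (E[R\<^sub>n\<^sup>\<theta>]\<^sup>s E[A\<^sup>\<theta>]\<^sup>s\<^sup>-\<^sup>1 + (b-1)\<^sup>\<theta>) / b\<^sup>\<theta> \<le> (E[R\<^sub>n\<^sup>\<theta>]\<^sup>s + (b-1)\<^sup>\<theta>) / b\<^sup>\<theta>\<close>.
  The right-hand side is increasing in \<open>E[R\<^sub>n\<^sup>\<theta>]\<close> and does not exceed \<open>x\<^sub>\<theta>\<close> at \<open>x\<^sub>\<theta>\<close>,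
  so once \<open>E[R\<^sub>n\<^sup>\<theta>] \<le> x\<^sub>\<theta>\<close> this bound persists for all later \<open>n\<close>.
  Since \<open>R\<^sub>n \<ge> (b-1)/b\<close> and \<open>\<theta> log r \<le> r\<^sup>\<theta> - 1\<close>, the quantity \<open>E[log R\<^sub>n]\<close> stays bounded,
  and dividing by \<open>s\<^sup>n\<close> gives free energy \<open>0\<close>.\<close>

lemma powr_add_le_add_powr:
  fixes a c \<theta> :: real
  assumes "0 \<le> a" "0 \<le> c" "0 < \<theta>" "\<theta> \<le> 1"
  shows "(a + c) powr \<theta> \<le> a powr \<theta> + c powr \<theta>"
proof (cases "a + c = 0")
  case True
  then show ?thesis using assms by simp
next
  case False
  then have pos: "a + c > 0" using assms by linarith
  have "t \<le> t powr \<theta>" if "0 \<le> t" "t \<le> 1" for t :: real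
    using powr_mono'[OF assms(4) that] by simp
  then have "a / (a + c) \<le> (a / (a + c)) powr \<theta>" "c / (a + c) \<le> (c / (a + c)) powr \<theta>"
    using assms pos by auto
  then have "a / (a + c) + c / (a + c) \<le> (a powr \<theta> + c powr \<theta>) / (a + c) powr \<theta>"
    by (simp add: powr_divide add_divide_distrib)
  moreover have "a / (a + c) + c / (a + c) = 1" using pos by (simp flip: add_divide_distrib)
  ultimately show ?thesis using pos by (simp add: field_simps)
qed

lemma ln_le_powr_minus_one_div:
  fixes r \<theta> :: real
  assumes "0 < r" "0 < \<theta>"
  shows "ln r \<le> (r powr \<theta> - 1) / \<theta>"
proof -
  have "\<theta> * ln r = ln (r powr \<theta>)" using assms by (simp add: ln_powr)
  also have "\<dots> \<le> r powr \<theta> - 1" using assms by (intro ln_le_minus_one) simp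
  finally show ?thesis using assms by (simp add: field_simps)
qed

lemma Greatest_mem_closed:
  fixes S :: "real set"
  assumes "closed S" "bdd_above S" "S \<noteq> {}"
  shows "(GREATEST x. x \<in> S) \<in> S"
proof -
  have "Sup S \<in> S" using closed_contains_Sup assms by blast
  moreover have "(GREATEST x. x \<in> S) = Sup S"
    using \<open>Sup S \<in> S\<close> assms(2) by (intro Greatest_equality cSup_upper)
  ultimately show ?thesis by simp
qed

lemma x_theta_fixed_point:
  fixes s :: nat and b \<theta> :: real
  assumes "s \<ge> 2" "b > 1"
    and nonempty: "{x. x \<ge> 0 \<and> (x ^ s + (b - 1) powr \<theta>) / b powr \<theta> \<le> x} \<noteq> {}"
  shows "x_theta s b \<theta> \<ge> 0" "(x_theta s b \<theta> ^ s + (b - 1) powr \<theta>) / b powr \<theta> \<le> x_theta s b \<theta>"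
proof -
  define S where "S = {x. x \<ge> 0 \<and> (x ^ s + (b - 1) powr \<theta>) / b powr \<theta> \<le> x}"
  have bpos: "b powr \<theta> > 0" using assms by auto
  have "closed S" unfolding S_def using bpos
    by (intro closed_Collect_conj closed_Collect_le continuous_intros) auto
  moreover have "x \<le> max 1 (b powr \<theta>)" if "x \<in> S" for x
  proof (cases "x \<le> 1")
    case False
    have "x ^ s + (b - 1) powr \<theta> \<le> b powr \<theta> * x"
      using that bpos unfolding S_def by (auto simp: divide_le_eq mult.commute)
    moreover have "x * x \<le> x ^ s"
      using False assms(1) power_increasing[of 2 s x] by (simp add: power2_eq_square)
    ultimately have "x * x \<le> b powr \<theta> * x" by (smt (verit) powr_ge_zero)
    then show ?thesis using False by simp
  qed simp
  then have "bdd_above S" by (intro bdd_aboveI) blast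
  ultimately have "(GREATEST x. x \<in> S) \<in> S"
    using nonempty by (intro Greatest_mem_closed) (simp_all add: S_def)
  then show "x_theta s b \<theta> \<ge> 0" "(x_theta s b \<theta> ^ s + (b - 1) powr \<theta>) / b powr \<theta> \<le> x_theta s b \<theta>"
    by (simp_all add: S_def x_theta_def)
qed

lemma le_fixed_point_of_mono_recursion:
  fixes y :: "nat \<Rightarrow> 'a :: order"
  assumes rec: "\<And>n. y (Suc n) \<le> f (y n)" and mono: "mono_on S f"
    and y_in: "range y \<subseteq> S" and "x \<in> S" and fixed: "f x \<le> x" and start: "y N \<le> x"
  shows "N \<le> m \<Longrightarrow> y m \<le> x"
proof (induction m rule: dec_induct)
  case base
  show ?case using start .
next
  case (step m)
  have "y (Suc m) \<le> f (y m)" by (rule rec)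
  also have "\<dots> \<le> f x" using mono step.IH y_in \<open>x \<in> S\<close> by (auto intro: mono_onD)
  finally show ?case using fixed by simp
qed

lemma abs_integral_ln_le:
  fixes M :: "real measure" and c \<theta> :: real
  assumes "prob_space M" "AE r in M. c \<le> r" "0 < c" "0 < \<theta>"
    and powr_int: "integrable M (\<lambda>r. r powr \<theta>)"
  shows "\<bar>\<integral>r. ln r \<partial>M\<bar> \<le> \<bar>ln c\<bar> + ((\<integral>r. r powr \<theta> \<partial>M) + 1) / \<theta>"
proof (cases "integrable M ln")
  case False
  have "0 \<le> (\<integral>r. r powr \<theta> \<partial>M)" by simp
  then show ?thesis using False \<open>0 < \<theta>\<close> by (simp add: not_integrable_integral_eq)
next
  case True
  interpret prob_space M by fact
  have "ln c = (\<integral>r. ln c \<partial>M)" by (simp add: prob_space)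
  also have "\<dots> \<le> (\<integral>r. ln r \<partial>M)"
    using True assms(2,3) by (intro integral_mono_AE) (auto elim!: eventually_mono)
  finally have lower: "ln c \<le> (\<integral>r. ln r \<partial>M)" .
  have "(\<integral>r. ln r \<partial>M) \<le> (\<integral>r. (r powr \<theta> - 1) / \<theta> \<partial>M)"
    using True assms(2,3,4) powr_int
    by (intro integral_mono_AE) (auto elim!: eventually_mono intro!: ln_le_powr_minus_one_div)
  also have "\<dots> = ((\<integral>r. r powr \<theta> \<partial>M) - 1) / \<theta>"
    using powr_int by (simp add: Bochner_Integration.integral_diff prob_space)
  finally have upper: "(\<integral>r. ln r \<partial>M) \<le> ((\<integral>r. r powr \<theta> \<partial>M) - 1) / \<theta>" .
  have "0 \<le> (\<integral>r. r powr \<theta> \<partial>M)" by simp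
  then have "((\<integral>r. r powr \<theta> \<partial>M) - 1) / \<theta> \<le> ((\<integral>r. r powr \<theta> \<partial>M) + 1) / \<theta>"
    "0 \<le> ((\<integral>r. r powr \<theta> \<partial>M) + 1) / \<theta>"
    using \<open>0 < \<theta>\<close> by (simp_all add: divide_right_mono)
  then show ?thesis using lower upper by linarith
qed

lemma LIMSEQ_bounded_divide_realpow_zero:
  fixes a :: "nat \<Rightarrow> real"
  assumes "1 < x" and bounded: "\<forall>\<^sub>F n in sequentially. \<bar>a n\<bar> \<le> K"
  shows "(\<lambda>n. a n / x ^ n) \<longlonglongrightarrow> 0"
proof (rule Lim_null_comparison)
  show "\<forall>\<^sub>F n in sequentially. norm (a n / x ^ n) \<le> K / x ^ n"
    using bounded by eventually_elim (use \<open>1 < x\<close> in \<open>simp add: abs_divide divide_right_mono\<close>)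
  show "(\<lambda>n. K / x ^ n) \<longlonglongrightarrow> 0" using \<open>1 < x\<close> by (rule LIMSEQ_divide_realpow_zero)
qed

lemma affine_product_law:
  fixes M :: "'i \<Rightarrow> real measure" and I :: "'i set" and b c \<theta> :: real
  assumes "finite I" and M_prob: "\<And>j. prob_space (M j)" and M_sets: "\<And>j. sets (M j) = sets borel"
    and M_nonneg: "\<And>j. j \<in> I \<Longrightarrow> AE r in M j. 0 \<le> r"
    and M_powr: "\<And>j. j \<in> I \<Longrightarrow> integrable (M j) (\<lambda>r. r powr \<theta>)"
    and "0 \<le> c" "0 < b" "0 < \<theta>" "\<theta> \<le> 1"
  defines "N \<equiv> distr (PiM I M) borel (\<lambda>x. ((\<Prod>j\<in>I. x j) + c) / b)"
  shows "prob_space N" "AE r in N. c / b \<le> r" "integrable N (\<lambda>r. r powr \<theta>)"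
    "(\<integral>r. r powr \<theta> \<partial>N) \<le> ((\<Prod>j\<in>I. \<integral>r. r powr \<theta> \<partial>M j) + c powr \<theta>) / b powr \<theta>"
proof -
  interpret P: product_prob_space M I
    by (intro product_prob_space.intro product_prob_space_axioms.intro product_sigma_finite.intro
        prob_space_imp_sigma_finite M_prob)
  define g where "g x = ((\<Prod>j\<in>I. x j) + c) / b" for x :: "'i \<Rightarrow> real"
  define F where "F x = ((\<Prod>j\<in>I. x j powr \<theta>) + c powr \<theta>) / b powr \<theta>" for x :: "'i \<Rightarrow> real"
  have g_meas: "g \<in> borel_measurable (PiM I M)"
    unfolding g_def using measurable_component_singleton[of _ I M] measurable_cong_sets[OF refl M_sets]
    by (intro borel_measurable_divide borel_measurable_add borel_measurable_prod borel_measurable_const) blast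
  have nonneg: "AE x in PiM I M. \<forall>j\<in>I. 0 \<le> x j"
    using \<open>finite I\<close> by (intro eventually_ball_finite ballI AE_PiM_component M_prob M_nonneg) auto
  have pointwise: "c / b \<le> g x \<and> g x powr \<theta> \<le> F x" if "\<forall>j\<in>I. 0 \<le> x j" for x
  proof -
    have P: "0 \<le> (\<Prod>j\<in>I. x j)" using that by (simp add: prod_nonneg)
    have "g x powr \<theta> = ((\<Prod>j\<in>I. x j) + c) powr \<theta> / b powr \<theta>"
      unfolding g_def by (simp add: powr_divide \<open>0 \<le> c\<close> P)
    also have "\<dots> \<le> ((\<Prod>j\<in>I. x j) powr \<theta> + c powr \<theta>) / b powr \<theta>"
      using P assms by (intro divide_right_mono powr_add_le_add_powr) auto
    finally show ?thesis
      using P \<open>0 < b\<close> by (simp add: g_def F_def prod_powr_distrib that divide_right_mono)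
  qed
  have prod_int: "integrable (PiM I M) (\<lambda>x. \<Prod>j\<in>I. x j powr \<theta>)"
    using P.product_integrable_prod[of I "\<lambda>j r. r powr \<theta>"] \<open>finite I\<close> M_powr by simp
  have F_int: "integrable (PiM I M) F" unfolding F_def using prod_int by simp
  have g_powr_int: "integrable (PiM I M) (\<lambda>x. g x powr \<theta>)"
  proof (rule Bochner_Integration.integrable_bound[OF F_int])
    show "(\<lambda>x. g x powr \<theta>) \<in> borel_measurable (PiM I M)" using g_meas by measurable
    show "AE x in PiM I M. norm (g x powr \<theta>) \<le> norm (F x)"
      using nonneg by eventually_elim (use pointwise in \<open>auto simp: F_def prod_nonneg\<close>)
  qed
  show "prob_space N"
    unfolding N_def g_def[symmetric] using g_meas by (intro P.prob_space_distr)
  show "AE r in N. c / b \<le> r"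
    unfolding N_def g_def[symmetric] using g_meas nonneg pointwise by (subst AE_distr_iff) auto
  show "integrable N (\<lambda>r. r powr \<theta>)"
    unfolding N_def g_def[symmetric] using g_meas g_powr_int by (subst integrable_distr_eq) auto
  have "(\<integral>r. r powr \<theta> \<partial>N) = (\<integral>x. g x powr \<theta> \<partial>PiM I M)"
    unfolding N_def g_def[symmetric] using g_meas by (subst integral_distr) auto
  also have "\<dots> \<le> (\<integral>x. F x \<partial>PiM I M)"
    using g_powr_int F_int nonneg pointwise by (intro integral_mono_AE) (auto elim!: eventually_mono)
  also have "\<dots> = ((\<Prod>j\<in>I. \<integral>r. r powr \<theta> \<partial>M j) + c powr \<theta>) / b powr \<theta>"
    using P.product_integral_prod[of I "\<lambda>j r. r powr \<theta>"] \<open>finite I\<close> M_powr prod_int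
    by (simp add: F_def Bochner_Integration.integral_add P.P.prob_space)
  finally show "(\<integral>r. r powr \<theta> \<partial>N) \<le> ((\<Prod>j\<in>I. \<integral>r. r powr \<theta> \<partial>M j) + c powr \<theta>) / b powr \<theta>" .
qed

lemma A_law_moments:
  fixes \<mu> :: "real measure" and \<beta> h \<theta> :: real
  assumes prob: "prob_space \<mu>" and sets: "sets \<mu> = sets borel"
    and exp_int: "integrable \<mu> (\<lambda>w. exp (\<theta> * \<beta> * w))"
  shows "prob_space (A_law \<mu> \<beta> h)" "AE r in A_law \<mu> \<beta> h. 0 \<le> r"
    "integrable (A_law \<mu> \<beta> h) (\<lambda>r. r powr \<theta>)"
    "(\<integral>r. r powr \<theta> \<partial>A_law \<mu> \<beta> h) = (\<integral>w. exp (\<theta> * (\<beta> * w - ln (mgf \<mu> \<beta>) + h)) \<partial>\<mu>)"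
proof -
  define T where "T w = exp (\<beta> * w - ln (mgf \<mu> \<beta>) + h)" for w
  have A_eq: "A_law \<mu> \<beta> h = distr \<mu> borel T" unfolding A_law_def T_def ..
  have T_meas: "T \<in> borel_measurable \<mu>"
    unfolding measurable_cong_sets[OF sets refl] T_def by measurable
  have T_powr: "T w powr \<theta> = exp (\<theta> * (\<beta> * w - ln (mgf \<mu> \<beta>) + h))" for w
    by (simp add: T_def exp_powr_real mult.commute)
  have "integrable \<mu> (\<lambda>w. exp (\<theta> * (h - ln (mgf \<mu> \<beta>))) * exp (\<theta> * \<beta> * w))"
    using exp_int by simp
  then have "integrable \<mu> (\<lambda>w. T w powr \<theta>)"
    by (simp add: T_powr algebra_simps flip: exp_add)
  then show "integrable (A_law \<mu> \<beta> h) (\<lambda>r. r powr \<theta>)"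
    unfolding A_eq using T_meas by (subst integrable_distr_eq) auto
  show "prob_space (A_law \<mu> \<beta> h)"
    unfolding A_eq using T_meas by (intro prob_space.prob_space_distr prob)
  show "AE r in A_law \<mu> \<beta> h. 0 \<le> r"
    unfolding A_eq using T_meas by (subst AE_distr_iff) (auto simp: T_def)
  show "(\<integral>r. r powr \<theta> \<partial>A_law \<mu> \<beta> h) = (\<integral>w. exp (\<theta> * (\<beta> * w - ln (mgf \<mu> \<beta>) + h)) \<partial>\<mu>)"
    unfolding A_eq using T_meas by (subst integral_distr) (auto simp: T_powr)
qed

lemma sets_A_law [simp]: "sets (A_law \<mu> \<beta> h) = sets borel"
  by (simp add: A_law_def)

lemma sets_R_law [simp]: "sets (R_law \<mu> s b \<beta> h n) = sets borel"
  by (cases n) simp_all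

lemma R_law_Suc_affine_product:
  "R_law \<mu> s b \<beta> h (Suc n) =
    distr (PiM {..<2 * s - 1} (\<lambda>j. if j < s then R_law \<mu> s b \<beta> h n else A_law \<mu> \<beta> h)) borel
      (\<lambda>x. ((\<Prod>j<2 * s - 1. x j) + (b - 1)) / b)"
proof -
  have "(\<Prod>j<s. x j) * (\<Prod>j\<in>{s..<2 * s - 1}. x j) = (\<Prod>j<2 * s - 1. x j)" for x :: "nat \<Rightarrow> real"
    by (simp add: lessThan_atLeast0 prod.atLeastLessThan_concat)
  then show ?thesis by (simp add: add_diff_eq)
qed

context
  fixes \<mu> :: "real measure" and s :: nat and b \<beta> h \<theta> :: real
  assumes b: "b > 1" and \<theta>: "0 < \<theta>" "\<theta> \<le> 1"
    and A_prob: "prob_space (A_law \<mu> \<beta> h)" and A_nonneg: "AE r in A_law \<mu> \<beta> h. 0 \<le> r"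
    and A_powr: "integrable (A_law \<mu> \<beta> h) (\<lambda>r. r powr \<theta>)"
begin

lemma R_law_Suc_laws:
  assumes "prob_space (R_law \<mu> s b \<beta> h n)" "AE r in R_law \<mu> s b \<beta> h n. (b - 1) / b \<le> r"
    and "integrable (R_law \<mu> s b \<beta> h n) (\<lambda>r. r powr \<theta>)"
  shows "prob_space (R_law \<mu> s b \<beta> h (Suc n))" "AE r in R_law \<mu> s b \<beta> h (Suc n). (b - 1) / b \<le> r"
    "integrable (R_law \<mu> s b \<beta> h (Suc n)) (\<lambda>r. r powr \<theta>)"
    "(\<integral>r. r powr \<theta> \<partial>R_law \<mu> s b \<beta> h (Suc n)) \<le>
      ((\<integral>r. r powr \<theta> \<partial>R_law \<mu> s b \<beta> h n) ^ s * (\<integral>r. r powr \<theta> \<partial>A_law \<mu> \<beta> h) ^ (s - 1)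
        + (b - 1) powr \<theta>) / b powr \<theta>"
proof -
  let ?M = "\<lambda>j. if j < s then R_law \<mu> s b \<beta> h n else A_law \<mu> \<beta> h"
  have "0 \<le> (b - 1) / b" using b by simp
  then have "AE r in R_law \<mu> s b \<beta> h n. 0 \<le> r" using assms(2) by (auto elim!: eventually_mono)
  then have "prob_space (?M j)" "sets (?M j) = sets borel" "AE r in ?M j. 0 \<le> r"
    "integrable (?M j) (\<lambda>r. r powr \<theta>)" for j
    using assms A_prob A_nonneg A_powr by auto
  with b \<theta> have law: "prob_space (R_law \<mu> s b \<beta> h (Suc n))" "AE r in R_law \<mu> s b \<beta> h (Suc n). (b - 1) / b \<le> r"
    "integrable (R_law \<mu> s b \<beta> h (Suc n)) (\<lambda>r. r powr \<theta>)"
    "(\<integral>r. r powr \<theta> \<partial>R_law \<mu> s b \<beta> h (Suc n)) \<le>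
      ((\<Prod>j<2 * s - 1. \<integral>r. r powr \<theta> \<partial>?M j) + (b - 1) powr \<theta>) / b powr \<theta>"
    unfolding R_law_Suc_affine_product by (auto intro!: affine_product_law)
  then show "prob_space (R_law \<mu> s b \<beta> h (Suc n))" "AE r in R_law \<mu> s b \<beta> h (Suc n). (b - 1) / b \<le> r"
    "integrable (R_law \<mu> s b \<beta> h (Suc n)) (\<lambda>r. r powr \<theta>)"
    by blast+
  have "(\<Prod>j<2 * s - 1. \<integral>r. r powr \<theta> \<partial>?M j)
      = (\<Prod>j<s. \<integral>r. r powr \<theta> \<partial>?M j) * (\<Prod>j\<in>{s..<2 * s - 1}. \<integral>r. r powr \<theta> \<partial>?M j)"
    unfolding lessThan_atLeast0 by (rule prod.atLeastLessThan_concat[symmetric]) auto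
  also have "(\<Prod>j<s. \<integral>r. r powr \<theta> \<partial>?M j) = (\<integral>r. r powr \<theta> \<partial>R_law \<mu> s b \<beta> h n) ^ s"
    by (simp cong: prod.cong_simp)
  also have "(\<Prod>j\<in>{s..<2 * s - 1}. \<integral>r. r powr \<theta> \<partial>?M j) = (\<integral>r. r powr \<theta> \<partial>A_law \<mu> \<beta> h) ^ (s - 1)"
    by (simp cong: prod.cong_simp)
  finally show "(\<integral>r. r powr \<theta> \<partial>R_law \<mu> s b \<beta> h (Suc n)) \<le>
      ((\<integral>r. r powr \<theta> \<partial>R_law \<mu> s b \<beta> h n) ^ s * (\<integral>r. r powr \<theta> \<partial>A_law \<mu> \<beta> h) ^ (s - 1)
        + (b - 1) powr \<theta>) / b powr \<theta>"
    using law(4) by simp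
qed

lemma R_law_laws:
  "prob_space (R_law \<mu> s b \<beta> h n) \<and> (AE r in R_law \<mu> s b \<beta> h n. (b - 1) / b \<le> r)
    \<and> integrable (R_law \<mu> s b \<beta> h n) (\<lambda>r. r powr \<theta>)"
proof (induction n)
  case 0
  have "integrable (return borel (1::real)) (\<lambda>r. 1)"
    by (simp add: prob_space_return prob_space.finite_measure finite_measure.integrable_const)
  then have "integrable (return borel (1::real)) (\<lambda>r. r powr \<theta>)"
    by (rule integrable_cong_AE_imp) (auto simp: AE_return)
  then show ?case unfolding R_law.simps(1) using b by (simp add: prob_space_return AE_return)
next
  case (Suc n)
  then show ?case using R_law_Suc_laws by blast
qed

lemma R_law_moment_Suc_le:
  assumes "(\<integral>r. r powr \<theta> \<partial>A_law \<mu> \<beta> h) \<le> 1"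
  shows "(\<integral>r. r powr \<theta> \<partial>R_law \<mu> s b \<beta> h (Suc n))
    \<le> ((\<integral>r. r powr \<theta> \<partial>R_law \<mu> s b \<beta> h n) ^ s + (b - 1) powr \<theta>) / b powr \<theta>"
proof -
  have "0 \<le> (\<integral>r. r powr \<theta> \<partial>R_law \<mu> s b \<beta> h n)" by simp
  moreover have "(\<integral>r. r powr \<theta> \<partial>R_law \<mu> s b \<beta> h (Suc n)) \<le>
      ((\<integral>r. r powr \<theta> \<partial>R_law \<mu> s b \<beta> h n) ^ s * (\<integral>r. r powr \<theta> \<partial>A_law \<mu> \<beta> h) ^ (s - 1)
        + (b - 1) powr \<theta>) / b powr \<theta>"
    using R_law_laws by (intro R_law_Suc_laws(4)) blast+
  ultimately show ?thesis using assms b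
    by (elim order_trans, intro divide_right_mono add_right_mono mult_left_le power_le_one) auto
qed

lemma R_law_moment_le_x_theta:
  assumes "(\<integral>r. r powr \<theta> \<partial>A_law \<mu> \<beta> h) \<le> 1" and "s \<ge> 2"
    and "{x. x \<ge> 0 \<and> (x ^ s + (b - 1) powr \<theta>) / b powr \<theta> \<le> x} \<noteq> {}"
    and "(\<integral>r. r powr \<theta> \<partial>R_law \<mu> s b \<beta> h N) \<le> x_theta s b \<theta>" and "N \<le> n"
  shows "(\<integral>r. r powr \<theta> \<partial>R_law \<mu> s b \<beta> h n) \<le> x_theta s b \<theta>"
proof -
  define y where "y n = (\<integral>r. r powr \<theta> \<partial>R_law \<mu> s b \<beta> h n)" for n
  define f where "f u = (u ^ s + (b - 1) powr \<theta>) / b powr \<theta>" for u :: real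
  have "y (Suc n) \<le> f (y n)" for n
    unfolding y_def f_def using assms(1) by (rule R_law_moment_Suc_le)
  moreover have "mono_on {0..} f"
    unfolding f_def using b by (intro mono_onI divide_right_mono add_right_mono power_mono) auto
  moreover have "range y \<subseteq> {0..}" by (auto simp: y_def)
  moreover have "x_theta s b \<theta> \<in> {0..}" "f (x_theta s b \<theta>) \<le> x_theta s b \<theta>"
    using x_theta_fixed_point[OF assms(2) b assms(3)] by (simp_all add: f_def)
  ultimately show ?thesis
    using le_fixed_point_of_mono_recursion[where y = y and f = f] assms(4,5) by (simp add: y_def)
qed

end

theorem lemma3p2:
  fixes \<mu> :: "real measure" and s :: nat and b \<beta> h \<theta> :: real
  assumes s: "s \<ge> 2" and b: "b > 1"
    and prob: "prob_space \<mu>" and sets: "sets \<mu> = sets borel"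
    and int1: "integrable \<mu> (\<lambda>w. w)" and mean: "(\<integral>w. w \<partial>\<mu>) = 0"
    and int2: "integrable \<mu> (\<lambda>w. w\<^sup>2)" and var: "(\<integral>w. w\<^sup>2 \<partial>\<mu>) = 1"
    and mgf_fin: "\<forall>t>0. integrable \<mu> (\<lambda>w. exp (t * w))"
    and \<beta>: "\<beta> > 0"
    and \<theta>: "0 < \<theta>" "\<theta> < 1"
    and nonempty: "{x::real. x \<ge> 0 \<and> (x ^ s + (b - 1) powr \<theta>) / b powr \<theta> \<le> x} \<noteq> {}"
    and Ath: "(\<integral>w. exp (\<theta> * (\<beta> * w - ln (mgf \<mu> \<beta>) + h)) \<partial>\<mu>) \<le> 1"
    and Rn: "\<exists>n. (\<integral>r. r powr \<theta> \<partial>(R_law \<mu> s b \<beta> h n)) \<le> x_theta s b \<theta>"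
  shows "free_energy_seq \<mu> s b \<beta> h \<longlonglongrightarrow> 0"
proof -
  have \<theta>_le: "\<theta> \<le> 1" using \<theta> by simp
  have A_laws: "prob_space (A_law \<mu> \<beta> h)" "AE r in A_law \<mu> \<beta> h. 0 \<le> r"
      "integrable (A_law \<mu> \<beta> h) (\<lambda>r. r powr \<theta>)" "(\<integral>r. r powr \<theta> \<partial>A_law \<mu> \<beta> h) \<le> 1"
    using A_law_moments[OF prob sets, of \<theta> \<beta> h] mgf_fin \<beta> \<theta> Ath by auto
  note R_laws = R_law_laws[OF b \<theta>(1) \<theta>_le A_laws(1-3)]
  obtain N where N: "(\<integral>r. r powr \<theta> \<partial>R_law \<mu> s b \<beta> h N) \<le> x_theta s b \<theta>" using Rn by blast
  have "\<bar>\<integral>r. ln r \<partial>R_law \<mu> s b \<beta> h n\<bar> \<le> \<bar>ln ((b - 1) / b)\<bar> + (x_theta s b \<theta> + 1) / \<theta>"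
    if "N \<le> n" for n
  proof -
    have "\<bar>\<integral>r. ln r \<partial>R_law \<mu> s b \<beta> h n\<bar>
        \<le> \<bar>ln ((b - 1) / b)\<bar> + ((\<integral>r. r powr \<theta> \<partial>R_law \<mu> s b \<beta> h n) + 1) / \<theta>"
      using R_laws b \<theta>(1) by (intro abs_integral_ln_le) auto
    also have "\<dots> \<le> \<bar>ln ((b - 1) / b)\<bar> + (x_theta s b \<theta> + 1) / \<theta>"
      using R_law_moment_le_x_theta[OF b \<theta>(1) \<theta>_le A_laws(1-4) s nonempty N that] \<theta>(1)
      by (simp add: divide_right_mono)
    finally show ?thesis .
  qed
  then have "\<forall>\<^sub>F n in sequentially.
      \<bar>\<integral>r. ln r \<partial>R_law \<mu> s b \<beta> h n\<bar> \<le> \<bar>ln ((b - 1) / b)\<bar> + (x_theta s b \<theta> + 1) / \<theta>"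
    by (auto simp: eventually_sequentially)
  then show ?thesis
    unfolding free_energy_seq_def[abs_def] using s by (intro LIMSEQ_bounded_divide_realpow_zero) auto
qed

end
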